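(* If a spherical curve $P$ has a trigon of type B, then $r(P)\le 3$.
   Context: A spherical curve is a smooth immersion $P:S^1\to S^2$ whose self-intersections are finitely many transverse double points, called crossings. It is oriented and has at least one crossing. Regions are the components of $S^2\setminus P(S^1)$, and edges are the arcs of the curve between consecutive crossings. A trigon is a region bounded by three edges. The Gauss word is the cyclic word of crossings met in one traversal of the curve; each crossing appears twice. Crossings $a,b$ are interlaced if their occurrences alternate $a\dots b\dots a\dots b$ in the cyclic word, i.e., their chords cross in the chord diagram. Let a trigon have crossings $x,y,z$. Each of its three edges gives a block of two consecutive letters in the Gauss word, one block on each of $\{x,y\}$, $\{y,z\}$, $\{z,x\}$, so the word has the form $B_1W_1B_2W_2B_3W_3$ with the $W_i$ free of $x,y,z$. The trigon's type is determined by how many of the three pairs among $x,y,z$ are interlaced: type A if exactly two pairs are interlaced; type B if exactly one; type C if all three (e.g. $xy\,W_1\,zx\,W_2\,yz\,W_3$, as in the trefoil curve); type D if none (e.g. $xy\,W_1\,yz\,W_2\,zx\,W_3$). A crossing is reducible if no crossing is interlaced with it; equivalently, only three distinct regions meet at it. $P$ is reducible if it has a reducible crossing. The inverse-half-twisted splice $I$ at a crossing $p$ takes the curve with cyclic Gauss word $p\,A\,p\,B$ to the curve with Gauss word $\overline{A}\,B$, where $\overline{A}$ is $A$ reversed. Geometrically, $p$ is smoothed in the unique way giving a single closed curve, and the result is re-oriented. The reductivity $r(P)$ is the minimal number of successive applications of $I$ needed to reach a reducible spherical curve; $r(P)=0$ if $P$ is reducible. *)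

theory Defs
  imports Main "HOL-Library.Extended_Nat"
begin

text \<open>
A spherical curve with n >= 1 crossings is encoded (up to orientation-preserving
homeomorphism of the sphere) by
 * its Gauss word w (a list of length 2n in which each crossing label occurs exactly
   twice; position k of w is the k-th crossing passed, edge k runs from position k
   to position k+1 mod 2n), and
 * a local orientation s c at each crossing c, fixing the counterclockwise cyclic
   order of the four half-edges at c (both choices give a transverse crossing).
Half-edges (darts) are pairs (k, b) with k < length w: (k, True) is the outgoing
end of edge k at position k, (k, False) the incoming end of edge k-1 at position k.
The data define a combinatorial map (rotation system) on the 4-regular graph;
the faces are the orbits of the face permutation, and the map lies on the sphere
iff Euler's formula V - E + F = 2 holds, i.e. F = n + 2 (the graph is connected).
\<close>

definition gauss_word :: "'a list \<Rightarrow> bool" where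
  "gauss_word w \<longleftrightarrow> w \<noteq> [] \<and> (\<forall>c\<in>set w. count_list w c = 2)"

definition partner :: "'a list \<Rightarrow> nat \<Rightarrow> nat" where
  "partner w k = (THE j. j < length w \<and> j \<noteq> k \<and> w ! j = w ! k)"

definition darts :: "'a list \<Rightarrow> (nat \<times> bool) set" where
  "darts w = {0..<length w} \<times> UNIV"

fun edge_flip :: "'a list \<Rightarrow> nat \<times> bool \<Rightarrow> nat \<times> bool" where
  "edge_flip w (k, True) = (Suc k mod length w, False)"
| "edge_flip w (k, False) = ((k + length w - 1) mod length w, True)"

text \<open>Counterclockwise successor of a dart around its crossing.\<close>
definition rot :: "'a list \<Rightarrow> ('a \<Rightarrow> bool) \<Rightarrow> nat \<times> bool \<Rightarrow> nat \<times> bool" where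
  "rot w s d = (let k = fst d; j = partner w k; i1 = min k j; i2 = max k j in
     if s (w ! k) then
       (if d = (i1, True) then (i2, True)
        else if d = (i2, True) then (i1, False)
        else if d = (i1, False) then (i2, False)
        else (i1, True))
     else
       (if d = (i1, True) then (i2, False)
        else if d = (i2, False) then (i1, False)
        else if d = (i1, False) then (i2, True)
        else (i1, True)))"

definition face_perm :: "'a list \<Rightarrow> ('a \<Rightarrow> bool) \<Rightarrow> nat \<times> bool \<Rightarrow> nat \<times> bool" where
  "face_perm w s = rot w s \<circ> edge_flip w"

definition face_of :: "'a list \<Rightarrow> ('a \<Rightarrow> bool) \<Rightarrow> nat \<times> bool \<Rightarrow> (nat \<times> bool) set" where
  "face_of w s d = {(face_perm w s ^^ k) d | k. True}"

definition regions :: "'a list \<Rightarrow> ('a \<Rightarrow> bool) \<Rightarrow> (nat \<times> bool) set set" where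
  "regions w s = face_of w s ` darts w"

definition spherical_curve :: "'a list \<Rightarrow> ('a \<Rightarrow> bool) \<Rightarrow> bool" where
  "spherical_curve w s \<longleftrightarrow> gauss_word w \<and> card (regions w s) = length w div 2 + 2"

definition crossing_at :: "'a list \<Rightarrow> nat \<times> bool \<Rightarrow> 'a" where
  "crossing_at w d = w ! fst d"

definition interlaced :: "'a list \<Rightarrow> 'a \<Rightarrow> 'a \<Rightarrow> bool" where
  "interlaced w a b \<longleftrightarrow> a \<noteq> b \<and>
     (\<exists>p q r t. p < q \<and> q < r \<and> r < t \<and> t < length w \<and>
        ((w!p = a \<and> w!q = b \<and> w!r = a \<and> w!t = b) \<or>
         (w!p = b \<and> w!q = a \<and> w!r = b \<and> w!t = a)))"

definition is_trigon :: "'a list \<Rightarrow> ('a \<Rightarrow> bool) \<Rightarrow> (nat \<times> bool) set \<Rightarrow> 'a \<Rightarrow> 'a \<Rightarrow> 'a \<Rightarrow> bool" where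
  "is_trigon w s R x y z \<longleftrightarrow> R \<in> regions w s \<and> card R = 3 \<and>
     x \<noteq> y \<and> y \<noteq> z \<and> x \<noteq> z \<and> crossing_at w ` R = {x, y, z}"

definition has_trigon_type_B :: "'a list \<Rightarrow> ('a \<Rightarrow> bool) \<Rightarrow> bool" where
  "has_trigon_type_B w s \<longleftrightarrow> (\<exists>R x y z. is_trigon w s R x y z \<and>
     ((interlaced w x y \<and> \<not> interlaced w y z \<and> \<not> interlaced w z x) \<or>
      (\<not> interlaced w x y \<and> interlaced w y z \<and> \<not> interlaced w z x) \<or>
      (\<not> interlaced w x y \<and> \<not> interlaced w y z \<and> interlaced w z x)))"

definition reducible :: "'a list \<Rightarrow> bool" where
  "reducible w \<longleftrightarrow> (\<exists>c\<in>set w. \<forall>d\<in>set w. \<not> interlaced w c d)"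

text \<open>Inverse-half-twisted splice: cyclic word p A p B becomes rev A @ B.\<close>
definition splice :: "'a list \<Rightarrow> 'a \<Rightarrow> 'a list" where
  "splice w p = (let i = (LEAST i. i < length w \<and> w ! i = p); j = partner w i in
     rev (take (j - Suc i) (drop (Suc i) w)) @ drop (Suc j) w @ take i w)"

fun splice_reach :: "nat \<Rightarrow> 'a list \<Rightarrow> 'a list \<Rightarrow> bool" where
  "splice_reach 0 w w' \<longleftrightarrow> w' = w"
| "splice_reach (Suc k) w w' \<longleftrightarrow> (\<exists>p\<in>set w. splice_reach k (splice w p) w')"

text \<open>Reductivity (infinity if no reducible curve is ever reached).\<close>
definition reductivity :: "'a list \<Rightarrow> enat" where
  "reductivity w = (INF k \<in> {k. \<exists>w'. splice_reach k w w' \<and> reducible w'}. enat k)"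

end

theory Submission
  imports Defs
begin

(*
  Only the Gauss word matters: every letter
  occurs exactly twice, interlacement, reducibility and splices are insensitive to
  rotating or reversing the cyclic word, and so is the number of splices needed to
  reach a reducible word.  A trigon is a face of the combinatorial map consisting
  of three darts; each dart lies on an edge of the curve, so the Gauss word contains
  three pairwise disjoint blocks of two consecutive letters joining the three
  crossings pairwise.  Up to rotation and reversal, the type-B condition forces the
  word into the shape  x y W1 x z W2 z y W3.  Splicing at x gives (up to rotation)
  y z W2 z y U; either z is already reducible there, or z is interlaced with a
  letter c, and splicing at c and then at y makes z reducible.  Hence three
  splices suffice.
*)

(* The combinatorial content of a Gauss word, without the non-emptiness requirement,
   so that it is preserved by every splice. *)
definition double_occurrence :: "'a list \<Rightarrow> bool" where
  "double_occurrence w \<longleftrightarrow> (\<forall>c\<in>set w. count_list w c = 2)"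

lemma gauss_word_double_occurrence: "gauss_word w \<Longrightarrow> double_occurrence w"
  unfolding gauss_word_def double_occurrence_def by simp

lemma double_occurrence_count:
  assumes "double_occurrence w"
  shows "count_list w c = (if c \<in> set w then 2 else 0)"
  using assms unfolding double_occurrence_def by (simp add: count_list_0_iff)

lemma double_occurrence_decomp:
  assumes "double_occurrence w" "p \<in> set w"
  obtains C A B where "w = C @ p # A @ p # B" "p \<notin> set C" "p \<notin> set A" "p \<notin> set B"
proof -
  have "count_list w p = 2" using assms unfolding double_occurrence_def by simp
  then obtain C r where 1: "w = C @ p # r" "p \<notin> set C" "count_list r p = 1"
    using count_list_Suc_split_first[of w p 1] by auto
  obtain A B where 2: "r = A @ p # B" "p \<notin> set A" "count_list B p = 0"
    using count_list_Suc_split_first[of r p 0] 1(3) by auto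
  show ?thesis using that 1 2 by (auto simp: count_list_0_iff)
qed

lemma nth_of_three_parts:
  assumes "w = u @ z # m @ z' # v" "j < length w"
  shows "(j < length u \<longrightarrow> w ! j \<in> set u) \<and>
         (length u < j \<and> j < length u + length m + 1 \<longrightarrow> w ! j \<in> set m) \<and>
         (length u + length m + 1 < j \<longrightarrow> w ! j \<in> set v)"
  using assms by (auto simp: nth_append nth_Cons' split: if_splits)

lemma occurrence_positions:
  assumes "w = C @ c # A @ c # B" "c \<notin> set C" "c \<notin> set A" "c \<notin> set B"
    "j < length w" "w ! j = c"
  shows "j = length C \<or> j = length C + length A + 1"
  using nth_of_three_parts[OF assms(1,5)] assms(2-4,6) by (metis linorder_neqE_nat)

section \<open>Interlacement\<close>

lemma interlaced_sym: "interlaced w a b = interlaced w b a"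
  unfolding interlaced_def by blast

lemma interlaced_in_set: "interlaced w a b \<Longrightarrow> a \<in> set w \<and> b \<in> set w"
  unfolding interlaced_def by (metis nth_mem order.strict_trans)

lemma interlaced_distinct: "interlaced w a b \<Longrightarrow> a \<noteq> b"
  unfolding interlaced_def by blast

lemma interlaced_iff_occurrences:
  assumes w: "w = u1 @ a # u2 @ a # u3" and a: "a \<notin> set u1" "a \<notin> set u2" "a \<notin> set u3"
    and ba: "b \<noteq> a"
  shows "interlaced w a b \<longleftrightarrow> b \<in> set u2 \<and> (b \<in> set u1 \<or> b \<in> set u3)"
proof
  assume "interlaced w a b"
  then obtain p q r t where o: "p < q" "q < r" "r < t" "t < length w" and
    c: "(w!p = a \<and> w!q = b \<and> w!r = a \<and> w!t = b) \<or> (w!p = b \<and> w!q = a \<and> w!r = b \<and> w!t = a)"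
    unfolding interlaced_def by blast
  note pos = occurrence_positions[OF w a]
  note part = nth_of_three_parts[OF w]
  from c show "b \<in> set u2 \<and> (b \<in> set u1 \<or> b \<in> set u3)"
  proof
    assume h: "w!p = a \<and> w!q = b \<and> w!r = a \<and> w!t = b"
    have "p = length u1" "r = length u1 + length u2 + 1" using pos[of p] pos[of r] h o by auto
    then show ?thesis using part[of q] part[of t] h o by auto
  next
    assume h: "w!p = b \<and> w!q = a \<and> w!r = b \<and> w!t = a"
    have "q = length u1" "t = length u1 + length u2 + 1" using pos[of q] pos[of t] h o by auto
    then show ?thesis using part[of p] part[of r] h o by auto
  qed
next
  assume h: "b \<in> set u2 \<and> (b \<in> set u1 \<or> b \<in> set u3)"
  then obtain v1 v2 where u2: "u2 = v1 @ b # v2" by (meson split_list)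
  from h consider "b \<in> set u1" | "b \<in> set u3" by blast
  then show "interlaced w a b"
  proof cases
    case 1
    then obtain v3 v4 where u1: "u1 = v3 @ b # v4" by (meson split_list)
    show ?thesis unfolding interlaced_def
      by (rule conjI[OF ba[symmetric]], rule exI[of _ "length v3"], rule exI[of _ "length u1"],
          rule exI[of _ "length u1 + 1 + length v1"], rule exI[of _ "length u1 + length u2 + 1"])
        (simp add: w u1 u2 nth_append)
  next
    case 2
    then obtain v3 v4 where u3: "u3 = v3 @ b # v4" by (meson split_list)
    show ?thesis unfolding interlaced_def
      by (rule conjI[OF ba[symmetric]], rule exI[of _ "length u1"],
          rule exI[of _ "length u1 + 1 + length v1"], rule exI[of _ "length u1 + length u2 + 1"],
          rule exI[of _ "length u1 + length u2 + 2 + length v3"])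
        (simp add: w u3 u2 nth_append)
  qed
qed

lemma interlaced_iff_count_between:
  assumes dw: "double_occurrence w"
    and w: "w = u1 @ a # u2 @ a # u3" and a: "a \<notin> set u1" "a \<notin> set u2" "a \<notin> set u3"
    and ba: "b \<noteq> a"
  shows "interlaced w a b \<longleftrightarrow> count_list u2 b = 1"
proof -
  have cw: "count_list w b = count_list u1 b + count_list u2 b + count_list u3 b" using w ba by simp
  have c2: "count_list w b = 0 \<or> count_list w b = 2" using double_occurrence_count[OF dw, of b] by simp
  have "interlaced w a b \<longleftrightarrow> count_list u2 b \<noteq> 0 \<and> count_list u1 b + count_list u3 b \<noteq> 0"
    using interlaced_iff_occurrences[OF w a ba] by (simp add: count_list_0_iff)
  also have "\<dots> \<longleftrightarrow> count_list u2 b = 1" using cw c2 by arith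
  finally show ?thesis .
qed

(* The letters strictly between the first two occurrences of a; computable by simp. *)
definition inner_segment :: "'a \<Rightarrow> 'a list \<Rightarrow> 'a list" where
  "inner_segment a w = takeWhile (\<lambda>c. c \<noteq> a) (tl (dropWhile (\<lambda>c. c \<noteq> a) w))"

lemma dropWhile_neq_append [simp]:
  "a \<notin> set u \<Longrightarrow> dropWhile (\<lambda>c. c \<noteq> a) (u @ v) = dropWhile (\<lambda>c. c \<noteq> a) v"
  by (rule dropWhile_append2) auto

lemma takeWhile_neq_append [simp]:
  "a \<notin> set u \<Longrightarrow> takeWhile (\<lambda>c. c \<noteq> a) (u @ v) = u @ takeWhile (\<lambda>c. c \<noteq> a) v"
  by (rule takeWhile_append2) auto

lemma inner_segment_eq:
  assumes "a \<notin> set u1" "a \<notin> set u2"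
  shows "inner_segment a (u1 @ a # u2 @ a # u3) = u2"
  using assms unfolding inner_segment_def by simp

lemma interlaced_iff_inner_segment:
  assumes dw: "double_occurrence w" and a: "a \<in> set w"
  shows "interlaced w a b \<longleftrightarrow> a \<noteq> b \<and> count_list (inner_segment a w) b = 1"
proof -
  obtain C A B where d: "w = C @ a # A @ a # B" "a \<notin> set C" "a \<notin> set A" "a \<notin> set B"
    using double_occurrence_decomp[OF dw a] .
  show ?thesis
  proof (cases "a = b")
    case True then show ?thesis unfolding interlaced_def by simp
  next
    case False
    moreover have "inner_segment a w = A" unfolding d(1) by (rule inner_segment_eq[OF d(2,3)])
    ultimately show ?thesis using interlaced_iff_count_between[OF dw d] by simp
  qed
qed

lemma reducible_if_isolated:
  assumes w: "w = u @ z # m @ z # v" and z: "z \<notin> set u" "z \<notin> set m" "z \<notin> set v"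
    and iso: "\<forall>c\<in>set m. c \<notin> set u \<and> c \<notin> set v"
  shows "reducible w"
  unfolding reducible_def
proof
  show "z \<in> set w" using w by simp
  show "\<forall>d\<in>set w. \<not> interlaced w z d"
  proof (intro ballI notI)
    fix d assume d: "interlaced w z d"
    then have "d \<noteq> z" using interlaced_distinct by metis
    then show False using d interlaced_iff_occurrences[OF w z] iso by blast
  qed
qed

definition exactly_one_interlaced :: "'a list \<Rightarrow> 'a \<Rightarrow> 'a \<Rightarrow> 'a \<Rightarrow> bool" where
  "exactly_one_interlaced w x y z \<longleftrightarrow>
     (interlaced w x y \<and> \<not> interlaced w y z \<and> \<not> interlaced w z x) \<or>
     (\<not> interlaced w x y \<and> interlaced w y z \<and> \<not> interlaced w z x) \<or>
     (\<not> interlaced w x y \<and> \<not> interlaced w y z \<and> interlaced w z x)"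

lemma exactly_one_interlaced_perm:
  assumes "exactly_one_interlaced w x y z" "{a, b, d} = {x, y, z}" "distinct [a, b, d]"
  shows "exactly_one_interlaced w a b d"
proof -
  have "a \<in> {x, y, z}" "b \<in> {x, y, z}" "d \<in> {x, y, z}" using assms(2) by blast+
  then show ?thesis using assms(1,3) interlaced_sym[of w]
    unfolding exactly_one_interlaced_def by (elim insertE emptyE) (simp_all, metis+)
qed

lemma splice_eq:
  assumes w: "w = C @ p # A @ p # B" and p: "p \<notin> set C" "p \<notin> set A" "p \<notin> set B"
  shows "splice w p = rev A @ B @ C"
proof -
  have least: "(LEAST i. i < length w \<and> w ! i = p) = length C"
  proof (rule Least_equality)
    show "length C < length w \<and> w ! length C = p" using w by simp
    show "length C \<le> i" if "i < length w \<and> w ! i = p" for i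
      using occurrence_positions[OF w p, of i] that by auto
  qed
  have "partner w (length C) = length C + length A + 1"
    unfolding partner_def
  proof (rule the_equality)
    show "length C + length A + 1 < length w \<and> length C + length A + 1 \<noteq> length C \<and>
      w ! (length C + length A + 1) = w ! length C"
      using w by (simp add: nth_append)
    show "j = length C + length A + 1" if "j < length w \<and> j \<noteq> length C \<and> w ! j = w ! length C" for j
      using occurrence_positions[OF w p, of j] that w by (auto simp: nth_append)
  qed
  then show ?thesis unfolding splice_def Let_def least using w by simp
qed

lemma splice_decomp:
  assumes "double_occurrence w" "p \<in> set w"
  obtains C A B where "w = C @ p # A @ p # B" "p \<notin> set C" "p \<notin> set A" "p \<notin> set B"
    "splice w p = rev A @ B @ C"
  using double_occurrence_decomp[OF assms] splice_eq by metis

lemma splice_double_occurrence: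
  assumes "double_occurrence w" "p \<in> set w"
  shows "double_occurrence (splice w p)"
proof -
  obtain C A B where d: "w = C @ p # A @ p # B" "p \<notin> set C" "p \<notin> set A" "p \<notin> set B"
    "splice w p = rev A @ B @ C" using splice_decomp[OF assms] .
  show ?thesis unfolding double_occurrence_def
  proof
    fix c assume "c \<in> set (splice w p)"
    then have "c \<noteq> p" "c \<in> set w" using d by auto
    then show "count_list (splice w p) c = 2"
      using assms(1) d unfolding double_occurrence_def by fastforce
  qed
qed

section \<open>Invariance under rotation and reversal\<close>

inductive cyc :: "'a list \<Rightarrow> 'a list \<Rightarrow> bool" where
  cyc_refl: "cyc u u"
| cyc_rotate1: "cyc u v \<Longrightarrow> cyc u (rotate1 v)"
| cyc_rev: "cyc u v \<Longrightarrow> cyc u (rev v)"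

lemma cyc_trans: "cyc v t \<Longrightarrow> cyc u v \<Longrightarrow> cyc u t"
  by (induction rule: cyc.induct) (auto intro: cyc.intros)

lemma cyc_rotate: "cyc u (rotate k u)"
  by (induction k) (auto intro: cyc.intros)

lemma cyc_swap: "cyc (P @ Q) (Q @ P)"
  using cyc_rotate[of "P @ Q" "length P"] by (simp add: rotate_append)

lemma cyc_set: "cyc u v \<Longrightarrow> set v = set u"
  by (induction rule: cyc.induct) auto

lemma count_list_rotate1 [simp]: "count_list (rotate1 v) c = count_list v c"
  by (cases v) auto

lemma cyc_double_occurrence: "cyc u v \<Longrightarrow> double_occurrence v = double_occurrence u"
  by (induction rule: cyc.induct) (auto simp: double_occurrence_def)

lemma interlaced_rotate1:
  assumes dv: "double_occurrence v"
  shows "interlaced (rotate1 v) a b = interlaced v a b"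
proof (cases "a \<in> set v \<and> a \<noteq> b")
  case False
  then have "\<not> interlaced (rotate1 v) a b" "\<not> interlaced v a b"
    using interlaced_in_set[of "rotate1 v" a b] interlaced_in_set[of v a b]
      interlaced_distinct[of "rotate1 v" a b] interlaced_distinct[of v a b] by (metis set_rotate1)+
  then show ?thesis by simp
next
  case True
  then have a: "a \<in> set v" and ab: "b \<noteq> a" by auto
  obtain C A B where d: "v = C @ a # A @ a # B" "a \<notin> set C" "a \<notin> set A" "a \<notin> set B"
    using double_occurrence_decomp[OF dv a] .
  note iv = interlaced_iff_occurrences[OF d ab]
  show ?thesis
  proof (cases C)
    case Nil
    have "rotate1 v = A @ a # B @ a # []" using d(1) Nil by simp
    from interlaced_iff_occurrences[OF this d(3,4) _ ab] show ?thesis using iv Nil by auto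
  next
    case (Cons h C')
    have "rotate1 v = C' @ a # A @ a # (B @ [h])" using d(1) Cons by simp
    from interlaced_iff_occurrences[OF this _ d(3) _ ab] show ?thesis using iv d(2,4) Cons by auto
  qed
qed

lemma interlaced_rev:
  assumes dv: "double_occurrence v"
  shows "interlaced (rev v) a b = interlaced v a b"
proof (cases "a \<in> set v \<and> a \<noteq> b")
  case False
  then have "\<not> interlaced (rev v) a b" "\<not> interlaced v a b"
    using interlaced_in_set[of "rev v" a b] interlaced_in_set[of v a b]
      interlaced_distinct[of "rev v" a b] interlaced_distinct[of v a b] by (metis set_rev)+
  then show ?thesis by simp
next
  case True
  then have a: "a \<in> set v" and ab: "b \<noteq> a" by auto
  obtain C A B where d: "v = C @ a # A @ a # B" "a \<notin> set C" "a \<notin> set A" "a \<notin> set B"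
    using double_occurrence_decomp[OF dv a] .
  have "rev v = rev B @ a # rev A @ a # rev C" using d(1) by simp
  from interlaced_iff_occurrences[OF this _ _ _ ab] show ?thesis
    using interlaced_iff_occurrences[OF d ab] d by auto
qed

lemma cyc_interlaced: "cyc u v \<Longrightarrow> double_occurrence u \<Longrightarrow> interlaced v a b = interlaced u a b"
proof (induction rule: cyc.induct)
  case (cyc_rotate1 u v)
  have "double_occurrence v" using cyc_double_occurrence[OF cyc_rotate1.hyps] cyc_rotate1.prems by simp
  then show ?case using interlaced_rotate1[of v a b] cyc_rotate1.IH cyc_rotate1.prems by simp
next
  case (cyc_rev u v)
  have "double_occurrence v" using cyc_double_occurrence[OF cyc_rev.hyps] cyc_rev.prems by simp
  then show ?case using interlaced_rev[of v a b] cyc_rev.IH cyc_rev.prems by simp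
qed simp

lemma cyc_reducible:
  assumes "cyc u v" "double_occurrence u"
  shows "reducible v = reducible u"
  unfolding reducible_def using cyc_set[OF assms(1)] cyc_interlaced[OF assms] by simp

lemma exactly_one_interlaced_cyc:
  assumes "cyc w w'" "double_occurrence w"
  shows "exactly_one_interlaced w' x y z = exactly_one_interlaced w x y z"
  unfolding exactly_one_interlaced_def using cyc_interlaced[OF assms] by simp

lemma splice_rotate1:
  assumes "double_occurrence v" "p \<in> set v"
  shows "splice (rotate1 v) p = splice v p \<or> splice (rotate1 v) p = rev (splice v p)"
proof -
  obtain C A B where d: "v = C @ p # A @ p # B" "p \<notin> set C" "p \<notin> set A" "p \<notin> set B"
    "splice v p = rev A @ B @ C" using splice_decomp[OF assms] .
  show ?thesis
  proof (cases C)
    case Nil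
    have r: "rotate1 v = A @ p # B @ p # []" using d(1) Nil by simp
    have "splice (rotate1 v) p = rev B @ [] @ A" by (rule splice_eq[OF r d(3,4)]) simp
    then show ?thesis using d(5) Nil by simp
  next
    case (Cons h C')
    have r: "rotate1 v = C' @ p # A @ p # (B @ [h])" using d(1) Cons by simp
    have "splice (rotate1 v) p = rev A @ (B @ [h]) @ C'"
      by (rule splice_eq[OF r]) (use d Cons in auto)
    then show ?thesis using d(5) Cons by simp
  qed
qed

lemma splice_rev:
  assumes "double_occurrence v" "p \<in> set v"
  shows "cyc (splice v p) (splice (rev v) p)"
proof -
  obtain C A B where d: "v = C @ p # A @ p # B" "p \<notin> set C" "p \<notin> set A" "p \<notin> set B"
    "splice v p = rev A @ B @ C" using splice_decomp[OF assms] .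
  have r: "rev v = rev B @ p # rev A @ p # rev C" using d(1) by simp
  have s: "splice (rev v) p = A @ rev C @ rev B" using splice_eq[OF r] d by simp
  have "cyc (splice v p) ((rev C @ rev B) @ A)"
    using cyc_rev[OF cyc_refl, of "splice v p"] d(5) by simp
  then show ?thesis using s cyc_trans[OF cyc_swap] by fastforce
qed

lemma cyc_splice:
  "cyc u v \<Longrightarrow> double_occurrence u \<Longrightarrow> p \<in> set u \<Longrightarrow> cyc (splice u p) (splice v p)"
proof (induction rule: cyc.induct)
  case (cyc_refl u) show ?case by (rule cyc.cyc_refl)
next
  case (cyc_rotate1 u v)
  have "double_occurrence v" "p \<in> set v" using cyc_rotate1 cyc_double_occurrence cyc_set by blast+
  then show ?case using splice_rotate1 cyc_rotate1 cyc.cyc_rev by metis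
next
  case (cyc_rev u v)
  have "double_occurrence v" "p \<in> set v" using cyc_rev cyc_double_occurrence cyc_set by blast+
  then show ?case using cyc_trans[OF splice_rev cyc_rev.IH] cyc_rev.prems by blast
qed

definition reduces_within :: "nat \<Rightarrow> 'a list \<Rightarrow> bool" where
  "reduces_within n w \<longleftrightarrow> (\<exists>k\<le>n. \<exists>w'. splice_reach k w w' \<and> reducible w')"

lemma reduces_within_reducible: "reducible w \<Longrightarrow> reduces_within n w"
  unfolding reduces_within_def by (intro exI[of _ 0]) simp

lemma reduces_within_splice:
  assumes "p \<in> set w" "reduces_within n (splice w p)"
  shows "reduces_within (Suc n) w"
proof -
  obtain k w' where "k \<le> n" "splice_reach k (splice w p) w'" "reducible w'"
    using assms(2) unfolding reduces_within_def by blast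
  then show ?thesis unfolding reduces_within_def using assms(1)
    by (intro exI[of _ "Suc k"]) auto
qed

lemma splice_reach_cyc:
  assumes "splice_reach k v v'" "cyc u v" "double_occurrence u"
  shows "\<exists>u'. splice_reach k u u' \<and> cyc u' v' \<and> double_occurrence u'"
  using assms
proof (induction k arbitrary: u v)
  case 0 then show ?case by simp
next
  case (Suc k)
  then obtain p where p: "p \<in> set v" "splice_reach k (splice v p) v'" by auto
  have pu: "p \<in> set u" using p(1) cyc_set[OF Suc.prems(2)] by simp
  have "cyc (splice u p) (splice v p)" by (rule cyc_splice[OF Suc.prems(2,3) pu])
  moreover have "double_occurrence (splice u p)" by (rule splice_double_occurrence[OF Suc.prems(3) pu])
  ultimately obtain u' where "splice_reach k (splice u p) u'" "cyc u' v'" "double_occurrence u'"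
    using Suc.IH[OF p(2)] by blast
  then show ?case using pu by auto
qed

lemma reduces_within_cyc:
  assumes "reduces_within n v" "cyc u v" "double_occurrence u"
  shows "reduces_within n u"
proof -
  obtain k v' where k: "k \<le> n" "splice_reach k v v'" "reducible v'"
    using assms(1) unfolding reduces_within_def by blast
  obtain u' where "splice_reach k u u'" "cyc u' v'" "double_occurrence u'"
    using splice_reach_cyc[OF k(2) assms(2,3)] by blast
  then show ?thesis unfolding reduces_within_def using k cyc_reducible by blast
qed

lemma reductivity_le:
  assumes "reduces_within n w"
  shows "reductivity w \<le> enat n"
proof -
  obtain k w' where "k \<le> n" "splice_reach k w w'" "reducible w'"
    using assms unfolding reduces_within_def by blast
  then have "reductivity w \<le> enat k" unfolding reductivity_def by (blast intro: INF_lower)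
  also have "\<dots> \<le> enat n" using \<open>k \<le> n\<close> by simp
  finally show ?thesis .
qed

section \<open>Words of type-B shape need at most three splices\<close>

definition type_B_word :: "'a list \<Rightarrow> bool" where
  "type_B_word N \<longleftrightarrow> (\<exists>x y z W1 W2 W3. N = [x, y] @ W1 @ [x, z] @ W2 @ [z, y] @ W3 \<and>
     distinct [x, y, z] \<and> {x, y, z} \<inter> set (W1 @ W2 @ W3) = {})"

lemma type_B_wordI:
  assumes "distinct [x, y, z]" "{x, y, z} \<inter> set (W1 @ W2 @ W3) = {}"
  shows "type_B_word ([x, y] @ W1 @ [x, z] @ W2 @ [z, y] @ W3)"
  unfolding type_B_word_def using assms by blast

(* After the first splice: either z is reducible, or a letter c seen from z is used
   for two more splices (at c, then at y) after which z is isolated. *)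
lemma type_B_tail_reduces_within_2:
  assumes dN: "double_occurrence N" and N: "N = [y, z] @ W @ [z, y] @ U"
    and yz: "y \<noteq> z" "{y, z} \<inter> set (W @ U) = {}"
  shows "reduces_within 2 N"
proof (cases "set W \<inter> set U = {}")
  case True
  have "N = [y] @ z # W @ z # (y # U)" using N by simp
  then have "reducible N" by (rule reducible_if_isolated) (use True yz in auto)
  then show ?thesis by (rule reduces_within_reducible)
next
  case False
  then obtain c where c: "c \<in> set W" "c \<in> set U" by blast
  have cyz: "c \<noteq> y" "c \<noteq> z" using c yz by auto
  have "count_list W c + count_list U c = 2"
    using double_occurrence_count[OF dN, of c] c cyz N by simp
  moreover have "count_list W c \<noteq> 0" "count_list U c \<noteq> 0" using c by (auto simp: count_list_0_iff)
  ultimately have once: "count_list W c = 1" "count_list U c = 1" by linarith+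
  obtain P Q where W: "W = P @ c # Q" "c \<notin> set P" using split_list_first[OF c(1)] by blast
  obtain R S where U: "U = R @ c # S" "c \<notin> set R" using split_list_first[OF c(2)] by blast
  have cQS: "c \<notin> set Q" "c \<notin> set S" using once W U by (auto simp: count_list_0_iff[symmetric])
  have yzPQRS: "y \<notin> set (P @ Q @ R @ S)" "z \<notin> set (P @ Q @ R @ S)" using yz W U by auto
  define M where "M = rev R @ [y, z] @ rev Q @ S @ [y, z] @ P"
  have "N = ([y, z] @ P) @ c # (Q @ [z, y] @ R) @ c # S" using N W U by simp
  then have "splice N c = rev (Q @ [z, y] @ R) @ S @ [y, z] @ P"
    by (rule splice_eq) (use W U cQS cyz in auto)
  then have M: "splice N c = M" unfolding M_def by simp
  have "M = rev R @ y # (z # rev Q @ S) @ y # (z # P)" unfolding M_def by simp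
  from splice_eq[OF this] have "splice M y = (rev S @ Q) @ z # [] @ z # (P @ rev R)"
    using yzPQRS yz by simp
  then have red: "reducible (splice M y)"
    using reducible_if_isolated[of "splice M y" "rev S @ Q" z "[]" "P @ rev R"] yzPQRS by simp
  have "reduces_within 1 M"
    using reduces_within_splice[OF _ reduces_within_reducible[OF red]] unfolding M_def by simp
  moreover have "c \<in> set N" using N c by simp
  ultimately show ?thesis using reduces_within_splice[of c N 1] M by (simp add: numeral_2_eq_2)
qed

lemma type_B_word_reduces_within_3:
  assumes dN: "double_occurrence N" and B: "type_B_word N"
  shows "reduces_within 3 N"
proof -
  obtain x y z W1 W2 W3 where N: "N = [x, y] @ W1 @ [x, z] @ W2 @ [z, y] @ W3"
    and xyz: "distinct [x, y, z]" "{x, y, z} \<inter> set (W1 @ W2 @ W3) = {}"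
    using B unfolding type_B_word_def by (elim exE conjE) (rule that, assumption+)
  have x: "x \<in> set N" using N by simp
  have "N = [] @ x # (y # W1) @ x # (z # W2 @ [z, y] @ W3)" using N by simp
  from splice_eq[OF this] have spl: "splice N x = rev W1 @ [y, z] @ W2 @ [z, y] @ W3"
    using xyz by simp
  define N1 where "N1 = [y, z] @ W2 @ [z, y] @ (W3 @ rev W1)"
  have cyc1: "cyc (splice N x) N1"
    unfolding spl N1_def using cyc_swap[of "rev W1" "[y, z] @ W2 @ [z, y] @ W3"] by simp
  have d1: "double_occurrence (splice N x)" by (rule splice_double_occurrence[OF dN x])
  have "reduces_within 2 N1"
    by (rule type_B_tail_reduces_within_2[OF _ N1_def])
      (use cyc_double_occurrence[OF cyc1] d1 xyz in auto)
  then have "reduces_within 2 (splice N x)" using reduces_within_cyc[OF _ cyc1 d1] by blast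
  then show ?thesis using reduces_within_splice[OF x] by (simp add: numeral_eq_Suc)
qed

section \<open>The combinatorial map of the curve\<close>

lemma other_occurrence_unique:
  assumes dw: "double_occurrence w" and k: "k < length w"
  shows "\<exists>!j. j < length w \<and> j \<noteq> k \<and> w ! j = w ! k"
proof -
  define c where "c = w ! k"
  have "c \<in> set w" using k unfolding c_def by simp
  then obtain C A B where d: "w = C @ c # A @ c # B" "c \<notin> set C" "c \<notin> set A" "c \<notin> set B"
    using double_occurrence_decomp[OF dw] by blast
  note pos = occurrence_positions[OF d]
  have k2: "k = length C \<or> k = length C + length A + 1" using pos[OF k] c_def by simp
  have both: "w ! length C = c" "w ! (length C + length A + 1) = c"
    "length C + length A + 1 < length w"
    using d(1) by (simp_all add: nth_append)
  define j0 where "j0 = (if k = length C then length C + length A + 1 else length C)"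
  have ck: "w ! k = c" unfolding c_def ..
  show ?thesis
  proof (rule ex1I[of _ j0])
    show "j0 < length w \<and> j0 \<noteq> k \<and> w ! j0 = w ! k"
      unfolding j0_def ck using both k2 by auto
    show "j = j0" if "j < length w \<and> j \<noteq> k \<and> w ! j = w ! k" for j
      using pos[of j] that k2 unfolding j0_def ck by auto
  qed
qed

lemma partner_spec:
  assumes "double_occurrence w" "k < length w"
  shows "partner w k < length w" "partner w k \<noteq> k" "w ! partner w k = w ! k"
  using theI'[OF other_occurrence_unique[OF assms]] unfolding partner_def by simp_all

lemma partner_eqI:
  assumes "double_occurrence w" "k < length w" "j < length w" "j \<noteq> k" "w ! j = w ! k"
  shows "partner w k = j"
  unfolding partner_def using the1_equality[OF other_occurrence_unique[OF assms(1,2)]] assms(3-5) by simp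

lemma partner_partner:
  assumes "double_occurrence w" "k < length w"
  shows "partner w (partner w k) = k"
  using partner_eqI[OF assms(1) partner_spec(1)[OF assms] assms(2)] partner_spec[OF assms] by simp

lemma darts_iff: "d \<in> darts w \<longleftrightarrow> fst d < length w"
  by (cases d) (simp add: darts_def)

lemma edge_flip_in_darts:
  assumes "d \<in> darts w"
  shows "edge_flip w d \<in> darts w"
proof (cases d)
  case (Pair k b)
  then have "k < length w" using assms unfolding darts_iff by simp
  then have n: "0 < length w" by linarith
  have "fst (edge_flip w (k, b)) < length w" using n by (cases b) simp_all
  then show ?thesis unfolding Pair darts_iff .
qed

lemma edge_flip_edge_flip: "d \<in> darts w \<Longrightarrow> edge_flip w (edge_flip w d) = d"
proof (cases d)
  case (Pair k b)
  assume "d \<in> darts w"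
  then have k: "k < length w" unfolding Pair darts_iff by simp
  show ?thesis
  proof (cases b)
    case True
    have "(Suc k mod length w + length w - 1) mod length w = k"
      using k by (cases "Suc k = length w") auto
    then show ?thesis using Pair True by simp
  next
    case False
    have "Suc ((k + length w - 1) mod length w) mod length w = k"
    proof (cases k)
      case 0 then show ?thesis using k by simp
    next
      case (Suc k0)
      then have "(k + length w - 1) mod length w = k0" using k by simp
      then show ?thesis using k Suc by simp
    qed
    then show ?thesis using Pair False by simp
  qed
qed

lemma rot_fst:
  assumes "double_occurrence w" "k < length w"
  shows "fst (rot w s (k, b)) = partner w k"
  using partner_spec(2)[OF assms] unfolding rot_def Let_def by (auto simp: min_def max_def)

(* The rotation around a crossing is injective; with edge_flip being an involution,
   the face permutation is injective on darts. *)
lemma rot_inj: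
  assumes dw: "double_occurrence w" and k: "k < length w" and k': "k' < length w"
    and eq: "rot w s (k, b) = rot w s (k', b')"
  shows "(k, b) = (k', b')"
proof -
  have "partner w k = partner w k'" using rot_fst[OF dw k] rot_fst[OF dw k'] eq by metis
  then have kk: "k = k'" using partner_partner[OF dw k] partner_partner[OF dw k'] by metis
  have "partner w k \<noteq> k" using partner_spec(2)[OF dw k] .
  then have "b = b'" using eq unfolding kk rot_def Let_def
    by (cases b; cases b'; cases "s (w ! k')"; auto simp: min_def max_def split: if_splits)
  then show ?thesis using kk by simp
qed

lemma face_perm_fst:
  assumes "double_occurrence w" "d \<in> darts w"
  shows "fst (face_perm w s d) = partner w (fst (edge_flip w d))"
proof -
  obtain k b where e: "edge_flip w d = (k, b)" by fastforce
  have "k < length w" using edge_flip_in_darts[OF assms(2)] unfolding e darts_iff by simp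
  then show ?thesis unfolding face_perm_def using rot_fst[OF assms(1)] e by simp
qed

lemma face_perm_in_darts:
  assumes "double_occurrence w" "d \<in> darts w"
  shows "face_perm w s d \<in> darts w"
  using face_perm_fst[OF assms] partner_spec(1)[OF assms(1)] edge_flip_in_darts[OF assms(2)]
  unfolding darts_iff by simp

lemma face_perm_inj:
  assumes dw: "double_occurrence w" and d: "d \<in> darts w" "d' \<in> darts w"
    and eq: "face_perm w s d = face_perm w s d'"
  shows "d = d'"
proof -
  obtain k b k' b' where e: "edge_flip w d = (k, b)" "edge_flip w d' = (k', b')" by fastforce
  have "k < length w" "k' < length w"
    using edge_flip_in_darts[OF d(1)] edge_flip_in_darts[OF d(2)] unfolding e darts_iff by simp_all
  then have "edge_flip w d = edge_flip w d'"
    using rot_inj[OF dw] eq e unfolding face_perm_def by simp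
  then show ?thesis using edge_flip_edge_flip d by metis
qed

lemma face_of_subset:
  assumes "d \<in> S" "\<And>d. d \<in> S \<Longrightarrow> face_perm w s d \<in> S"
  shows "face_of w s d \<subseteq> S"
proof -
  have "(face_perm w s ^^ k) d \<in> S" for k
    by (induction k) (use assms in auto)
  then show ?thesis unfolding face_of_def by auto
qed

lemma face_of_iterate: "(face_perm w s ^^ k) d \<in> face_of w s d"
  unfolding face_of_def by auto

lemma trigon_face_cycle:
  assumes dw: "double_occurrence w" and R: "R \<in> regions w s" "card R = 3"
  obtains d where "d \<in> darts w" "R = {d, face_perm w s d, face_perm w s (face_perm w s d)}"
    "face_perm w s (face_perm w s (face_perm w s d)) = d"
    "distinct [d, face_perm w s d, face_perm w s (face_perm w s d)]"
proof -
  define f where "f = face_perm w s"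
  obtain d where d: "d \<in> darts w" "R = face_of w s d" using R(1) unfolding regions_def by blast
  have darts: "f d \<in> darts w" "f (f d) \<in> darts w"
    using face_perm_in_darts[OF dw] d(1) unfolding f_def by blast+
  have mem: "d \<in> R" "f d \<in> R" "f (f d) \<in> R" "f (f (f d)) \<in> R"
    using face_of_iterate[of 0 w s d] face_of_iterate[of 1 w s d] face_of_iterate[of 2 w s d]
      face_of_iterate[of 3 w s d]
    unfolding d(2) f_def by (simp_all add: numeral_eq_Suc)
  have small: "\<not> R \<subseteq> S" if "card S < 3" "finite S" for S
  proof
    assume "R \<subseteq> S"
    then have "card R \<le> card S" by (rule card_mono[OF that(2)])
    then show False using that(1) R(2) by simp
  qed
  have "f d \<noteq> d"
  proof
    assume "f d = d"
    then have "R \<subseteq> {d}" unfolding d(2) by (intro face_of_subset) (auto simp: f_def)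
    then show False using small[of "{d}"] by simp
  qed
  moreover have "f (f d) \<noteq> d \<and> f (f d) \<noteq> f d"
  proof (rule ccontr)
    assume "\<not> ?thesis"
    then have "R \<subseteq> {d, f d}" unfolding d(2) by (intro face_of_subset) (auto simp: f_def)
    then show False using small[of "{d, f d}"] by (simp add: card_insert_if)
  qed
  ultimately have dist: "distinct [d, f d, f (f d)]" by auto
  have "finite R" using R(2) card.infinite by fastforce
  then have R3: "R = {d, f d, f (f d)}"
    using card_subset_eq[of R "{d, f d, f (f d)}"] mem R(2) dist by simp
  have "f (f (f d)) \<noteq> f d" "f (f (f d)) \<noteq> f (f d)"
    using face_perm_inj[OF dw darts(2) d(1)] face_perm_inj[OF dw darts(2) darts(1)] dist
    unfolding f_def by auto
  then have "f (f (f d)) = d" using mem(4) R3 by auto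
  then show ?thesis using that d(1) R3 dist unfolding f_def by blast
qed

definition edge_between :: "'a list \<Rightarrow> nat \<Rightarrow> 'a \<Rightarrow> 'a \<Rightarrow> bool" where
  "edge_between w e u v \<longleftrightarrow> e < length w \<and> {w ! e, w ! (Suc e mod length w)} = {u, v}"

lemma edge_betweenI:
  assumes "e < length w" "{e, Suc e mod length w} = {k, m}" "w ! k = u" "w ! m = v"
  shows "edge_between w e u v"
proof -
  have "{w ! e, w ! (Suc e mod length w)} = (\<lambda>i. w ! i) ` {e, Suc e mod length w}" by simp
  also have "\<dots> = {u, v}" using assms(2-4) by simp
  finally show ?thesis unfolding edge_between_def using assms(1) by simp
qed

lemma edge_between_sym: "edge_between w e u v = edge_between w e v u"
  unfolding edge_between_def by (simp add: insert_commute)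

lemma distinct_edge_ends:
  assumes "{e0, Suc e0 mod n} = {k0, m0}" "{e1, Suc e1 mod n} = {k1, m1}"
    "{e2, Suc e2 mod n} = {k2, m2}" "distinct [k0, m0, k1, m1, k2, m2]"
  shows "distinct [e0, Suc e0 mod n, e1, Suc e1 mod n, e2, Suc e2 mod n]"
proof (rule card_distinct)
  have "set [e0, Suc e0 mod n, e1, Suc e1 mod n, e2, Suc e2 mod n] = set [k0, m0, k1, m1, k2, m2]"
    using assms(1-3) by auto
  then show "card (set [e0, Suc e0 mod n, e1, Suc e1 mod n, e2, Suc e2 mod n]) =
      length [e0, Suc e0 mod n, e1, Suc e1 mod n, e2, Suc e2 mod n]"
    using distinct_card[OF assms(4)] by simp
qed

(* The edge carrying a dart d joins the crossing of d to the crossing of the next dart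
   of its face; its far end is the other occurrence of that crossing. *)
lemma dart_edge:
  assumes dw: "double_occurrence w" and d: "d \<in> darts w"
  obtains e where "edge_between w e (crossing_at w d) (crossing_at w (face_perm w s d))"
    "{e, Suc e mod length w} = {fst d, fst (edge_flip w d)}"
    "w ! fst (edge_flip w d) = crossing_at w (face_perm w s d)"
    "fst (edge_flip w d) \<noteq> fst (face_perm w s d)"
proof -
  obtain k b where kb: "d = (k, b)" by fastforce
  have k: "k < length w" using d unfolding kb darts_iff by simp
  define m where "m = fst (edge_flip w d)"
  have m: "m < length w" using edge_flip_in_darts[OF d] unfolding m_def darts_iff .
  have fd: "fst (face_perm w s d) = partner w m" using face_perm_fst[OF dw d] unfolding m_def .
  have letters: "w ! m = crossing_at w (face_perm w s d)" "m \<noteq> fst (face_perm w s d)"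
    using partner_spec[OF dw m] unfolding fd crossing_at_def by simp_all
  have dk: "w ! fst d = crossing_at w d" unfolding crossing_at_def ..
  show ?thesis
  proof (cases b)
    case True
    then have "{k, Suc k mod length w} = {fst d, m}" unfolding m_def kb by simp
    then show ?thesis using that[OF edge_betweenI[OF k _ dk letters(1)]] letters unfolding m_def by blast
  next
    case False
    have "edge_flip w d = (m, True)" unfolding m_def kb using False by simp
    then have "(Suc m mod length w, False) = d" using edge_flip_edge_flip[OF d] by simp
    then have "Suc m mod length w = k" unfolding kb by simp
    then have "{m, Suc m mod length w} = {fst d, m}" unfolding kb by auto
    then show ?thesis using that[OF edge_betweenI[OF m _ dk letters(1)]] letters unfolding m_def by blast
  qed
qed

lemma trigon_edges:
  assumes dw: "double_occurrence w" and T: "is_trigon w s R x y z"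
  obtains c0 c1 c2 e0 e1 e2 where "{c0, c1, c2} = {x, y, z}" "distinct [c0, c1, c2]"
    "edge_between w e0 c0 c1" "edge_between w e1 c1 c2" "edge_between w e2 c2 c0"
    "distinct [e0, Suc e0 mod length w, e1, Suc e1 mod length w, e2, Suc e2 mod length w]"
proof -
  define f where "f = face_perm w s"
  obtain d0 where d0: "d0 \<in> darts w" "R = {d0, f d0, f (f d0)}" "f (f (f d0)) = d0"
    "distinct [d0, f d0, f (f d0)]"
    using trigon_face_cycle[OF dw] T unfolding is_trigon_def f_def by metis
  define d1 where "d1 = f d0"
  define d2 where "d2 = f d1"
  have darts: "d1 \<in> darts w" "d2 \<in> darts w"
    using face_perm_in_darts[OF dw] d0(1) unfolding d1_def d2_def f_def by blast+
  define c0 where "c0 = crossing_at w d0"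
  define c1 where "c1 = crossing_at w d1"
  define c2 where "c2 = crossing_at w d2"
  have cs: "{c0, c1, c2} = {x, y, z}"
    using T d0(2) unfolding is_trigon_def c0_def c1_def c2_def d1_def d2_def by simp
  have cd: "distinct [c0, c1, c2]"
  proof (rule card_distinct)
    show "card (set [c0, c1, c2]) = length [c0, c1, c2]"
      using cs T unfolding is_trigon_def by simp
  qed
  obtain e0 where e0: "edge_between w e0 c0 c1"
    "{e0, Suc e0 mod length w} = {fst d0, fst (edge_flip w d0)}"
    "w ! fst (edge_flip w d0) = c1" "fst (edge_flip w d0) \<noteq> fst d1"
    using dart_edge[OF dw d0(1), of s] unfolding c0_def c1_def d1_def f_def by metis
  obtain e1 where e1: "edge_between w e1 c1 c2"
    "{e1, Suc e1 mod length w} = {fst d1, fst (edge_flip w d1)}"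
    "w ! fst (edge_flip w d1) = c2" "fst (edge_flip w d1) \<noteq> fst d2"
    using dart_edge[OF dw darts(1), of s] unfolding c1_def c2_def d2_def f_def by metis
  obtain e2 where e2: "edge_between w e2 c2 c0"
    "{e2, Suc e2 mod length w} = {fst d2, fst (edge_flip w d2)}"
    "w ! fst (edge_flip w d2) = c0" "fst (edge_flip w d2) \<noteq> fst d0"
    using dart_edge[OF dw darts(2), of s] d0(3) unfolding c0_def c2_def d2_def d1_def f_def by metis
  have pos: "w ! fst d0 = c0" "w ! fst d1 = c1" "w ! fst d2 = c2"
    unfolding c0_def c1_def c2_def crossing_at_def by simp_all
  have "distinct [fst d0, fst (edge_flip w d0), fst d1, fst (edge_flip w d1), fst d2, fst (edge_flip w d2)]"
    using cd pos e0(3,4) e1(3,4) e2(3,4) by auto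
  from distinct_edge_ends[OF e0(2) e1(2) e2(2) this] show ?thesis
    using that[OF cs cd e0(1) e1(1) e2(1)] by blast
qed

section \<open>Normal form of a word containing a type-B trigon\<close>

lemma rotate_nth_shift:
  assumes "p < length w" "r < length w"
  shows "rotate r w ! ((p + (length w - r)) mod length w) = w ! p"
proof -
  let ?n = "length w"
  have n0: "0 < ?n" using assms by linarith
  have "rotate r w ! ((p + (?n - r)) mod ?n) = w ! ((r + (p + (?n - r)) mod ?n) mod ?n)"
    by (rule nth_rotate) (rule mod_less_divisor[OF n0])
  also have "(r + (p + (?n - r)) mod ?n) mod ?n = (p + ?n) mod ?n"
    using assms(2) by (simp add: mod_add_right_eq)
  also have "\<dots> = p" using assms(1) by simp
  finally show ?thesis .
qed

lemma shift_Suc_mod: "(Suc p mod n + (n - r)) mod n = Suc ((p + (n - r)) mod n) mod n"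
  by (simp add: mod_add_left_eq mod_Suc_eq)

lemma distinct_shift:
  fixes r n :: nat and xs :: "nat list"
  assumes "r < n" "set xs \<subseteq> {..<n}" "distinct xs"
  shows "distinct (map (\<lambda>p. (p + (n - r)) mod n) xs)"
proof -
  have unshift: "(r + (p + (n - r)) mod n) mod n = p" if "p < n" for p
  proof -
    have "(r + (p + (n - r)) mod n) mod n = (r + (p + (n - r))) mod n" by (rule mod_add_right_eq)
    also have "r + (p + (n - r)) = p + n" using assms(1) by simp
    finally show ?thesis using that by simp
  qed
  have "inj_on (\<lambda>p. (p + (n - r)) mod n) {..<n}" by (rule inj_onI) (metis unshift lessThan_iff)
  then have "inj_on (\<lambda>p. (p + (n - r)) mod n) (set xs)" using assms(2) by (rule inj_on_subset)
  then show ?thesis unfolding distinct_map using assms(3) by blast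
qed

lemma edge_between_rotate:
  assumes e: "edge_between w e u v" and r: "r < length w"
  shows "edge_between (rotate r w) ((e + (length w - r)) mod length w) u v"
proof -
  let ?n = "length w" and ?sh = "\<lambda>p. (p + (length w - r)) mod length w"
  have n0: "0 < ?n" using r by linarith
  then have e': "e < ?n" "Suc e mod ?n < ?n" using e unfolding edge_between_def by simp_all
  have "rotate r w ! ?sh e = w ! e" "rotate r w ! ?sh (Suc e mod ?n) = w ! (Suc e mod ?n)"
    using rotate_nth_shift[OF _ r] e' by simp_all
  moreover have "?sh (Suc e mod ?n) = Suc (?sh e) mod ?n" by (rule shift_Suc_mod)
  ultimately show ?thesis using e e' mod_less_divisor[OF n0] unfolding edge_between_def by simp
qed

lemma split_pair:
  assumes "Suc i < length xs"
  shows "xs = take i xs @ [xs ! i, xs ! Suc i] @ drop (Suc (Suc i)) xs"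
proof -
  have "drop i xs = xs ! i # xs ! Suc i # drop (Suc (Suc i)) xs"
    using assms by (simp add: Cons_nth_drop_Suc)
  then show ?thesis by (metis append_Cons append_Nil append_take_drop_id)
qed

lemma split_three_pairs:
  assumes "1 < i" "Suc i < j" "Suc j < length xs"
  shows "\<exists>U1 U2 U3. xs = [xs ! 0, xs ! 1] @ U1 @ [xs ! i, xs ! Suc i] @ U2 @ [xs ! j, xs ! Suc j] @ U3"
proof -
  let ?T = "take j xs"
  let ?V = "take i ?T"
  have "xs = ?T @ [xs ! j, xs ! Suc j] @ drop (Suc (Suc j)) xs" by (rule split_pair[OF assms(3)])
  moreover have "?T = ?V @ [xs ! i, xs ! Suc i] @ drop (Suc (Suc i)) ?T"
    using split_pair[of i ?T] assms by simp
  moreover have "?V = [xs ! 0, xs ! 1] @ drop 2 ?V"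
    using split_pair[of 0 ?V] assms by (simp add: numeral_2_eq_2)
  ultimately have "xs = [xs ! 0, xs ! 1] @ drop 2 ?V @ [xs ! i, xs ! Suc i] @ drop (Suc (Suc i)) ?T
      @ [xs ! j, xs ! Suc j] @ drop (Suc (Suc j)) xs"
    by (metis append.assoc)
  then show ?thesis by blast
qed

lemma count_list_doubleton:
  assumes "{p, q} = {u, v}" "u \<noteq> v"
  shows "count_list [p, q] x = count_list [u, v] x"
  using assms by (auto simp: doubleton_eq_iff)

lemma letters_outside_pair_blocks:
  assumes dw: "double_occurrence w"
    and w: "w = [a, b] @ U1 @ [p1, q1] @ U2 @ [p2, q2] @ U3"
    and abd: "distinct [a, b, d]"
    and blocks: "{{p1, q1}, {p2, q2}} = {{a, d}, {b, d}}"
  shows "{a, b, d} \<inter> set (U1 @ U2 @ U3) = {}"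
proof -
  have pairs: "{p1, q1} = {a, d} \<and> {p2, q2} = {b, d} \<or> {p1, q1} = {b, d} \<and> {p2, q2} = {a, d}"
    using blocks by (simp add: doubleton_eq_iff)
  then have inw: "{a, b, d} \<subseteq> set w" unfolding w by auto
  have blocks_count: "count_list [p1, q1, p2, q2] v = count_list [a, d, b, d] v" for v
  proof -
    have split: "count_list [p1, q1, p2, q2] v = count_list [p1, q1] v + count_list [p2, q2] v"
      "count_list [a, d, b, d] v = count_list [a, d] v + count_list [b, d] v"
      using count_list_append[of "[p1, q1]" "[p2, q2]" v] count_list_append[of "[a, d]" "[b, d]" v]
      by simp_all
    from pairs show ?thesis
    proof
      assume h: "{p1, q1} = {a, d} \<and> {p2, q2} = {b, d}"
      have "count_list [p1, q1] v = count_list [a, d] v" "count_list [p2, q2] v = count_list [b, d] v"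
        by (rule count_list_doubleton; use h abd in simp)+
      then show ?thesis using split by linarith
    next
      assume h: "{p1, q1} = {b, d} \<and> {p2, q2} = {a, d}"
      have "count_list [p1, q1] v = count_list [b, d] v" "count_list [p2, q2] v = count_list [a, d] v"
        by (rule count_list_doubleton; use h abd in simp)+
      then show ?thesis using split by linarith
    qed
  qed
  have "v \<notin> set (U1 @ U2 @ U3)" if v: "v \<in> {a, b, d}" for v
  proof -
    have "count_list w v = count_list [a, b] v + count_list [p1, q1, p2, q2] v
        + count_list (U1 @ U2 @ U3) v" unfolding w by simp
    moreover have "count_list w v = 2" using double_occurrence_count[OF dw, of v] v inw by auto
    moreover have "count_list [a, b] v + count_list [a, d, b, d] v = 2" using v abd by auto
    ultimately have "count_list (U1 @ U2 @ U3) v = 0" using blocks_count[of v] by linarith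
    then show ?thesis by (simp add: count_list_0_iff)
  qed
  then show ?thesis by blast
qed

(* Of the eight ways to place the blocks, exactly three satisfy the type-B condition,
   and each of them is a rotation of the type-B shape. *)
lemma type_B_word_of_blocks:
  assumes dw: "double_occurrence w"
    and w: "w = [a, b] @ U1 @ [p1, q1] @ U2 @ [p2, q2] @ U3"
    and abd: "distinct [a, b, d]"
    and blocks: "{{p1, q1}, {p2, q2}} = {{a, d}, {b, d}}"
    and B: "exactly_one_interlaced w a b d"
  shows "\<exists>N. cyc w N \<and> type_B_word N"
proof -
  have "{p1, q1} = {a, d} \<and> {p2, q2} = {b, d} \<or> {p1, q1} = {b, d} \<and> {p2, q2} = {a, d}"
    using blocks by (simp add: doubleton_eq_iff)
  then consider
      (ad_bd) "p1 = a" "q1 = d" "p2 = b" "q2 = d" | (ad_db) "p1 = a" "q1 = d" "p2 = d" "q2 = b"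
    | (da_bd) "p1 = d" "q1 = a" "p2 = b" "q2 = d" | (da_db) "p1 = d" "q1 = a" "p2 = d" "q2 = b"
    | (bd_ad) "p1 = b" "q1 = d" "p2 = a" "q2 = d" | (bd_da) "p1 = b" "q1 = d" "p2 = d" "q2 = a"
    | (db_ad) "p1 = d" "q1 = b" "p2 = a" "q2 = d" | (db_da) "p1 = d" "q1 = b" "p2 = d" "q2 = a"
    using abd by (auto simp: doubleton_eq_iff)
  note block_cases = this
  have ne: "a \<noteq> b" "b \<noteq> a" "a \<noteq> d" "d \<noteq> a" "b \<noteq> d" "d \<noteq> b" using abd by auto
  have "{a, b, d} \<inter> set (U1 @ U2 @ U3) = {}"
    by (rule letters_outside_pair_blocks[OF dw w abd blocks])
  then have nU: "a \<notin> set U1" "a \<notin> set U2" "a \<notin> set U3" "b \<notin> set U1" "b \<notin> set U2"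
    "b \<notin> set U3" "d \<notin> set U1" "d \<notin> set U2" "d \<notin> set U3" by auto
  have inw: "a \<in> set w" "b \<in> set w" "d \<in> set w" using w block_cases by auto
  note I = interlaced_iff_inner_segment[OF dw inw(1)] interlaced_iff_inner_segment[OF dw inw(2)]
    interlaced_iff_inner_segment[OF dw inw(3)]
  from block_cases show ?thesis
  proof cases
    case ad_db
    have "type_B_word w" unfolding w ad_db by (rule type_B_wordI) (use abd nU in auto)
    then show ?thesis using cyc_refl by blast
  next
    case bd_ad
    have "type_B_word ([a, d] @ U3 @ [a, b] @ U1 @ [b, d] @ U2)"
      by (rule type_B_wordI) (use abd nU in auto)
    moreover have "cyc w ([a, d] @ U3 @ [a, b] @ U1 @ [b, d] @ U2)"
      using cyc_swap[of "[a, b] @ U1 @ [b, d] @ U2" "[a, d] @ U3"] unfolding w bd_ad by simp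
    ultimately show ?thesis by blast
  next
    case db_da
    have "type_B_word ([d, b] @ U2 @ [d, a] @ U3 @ [a, b] @ U1)"
      by (rule type_B_wordI) (use abd nU in auto)
    moreover have "cyc w ([d, b] @ U2 @ [d, a] @ U3 @ [a, b] @ U1)"
      using cyc_swap[of "[a, b] @ U1" "[d, b] @ U2 @ [d, a] @ U3"] unfolding w db_da by simp
    ultimately show ?thesis by blast
    (* in the remaining five placements none or two of the pairs are interlaced *)
  qed (use B[unfolded exactly_one_interlaced_def] I ne nU in \<open>simp_all add: w inner_segment_def\<close>)
qed

lemma type_B_word_of_edges_at_start:
  assumes dw: "double_occurrence w"
    and edges: "edge_between w 0 a b" "edge_between w i a d" "edge_between w j b d"
    and ends: "distinct [0, 1, i, Suc i mod length w, j, Suc j mod length w]"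
    and abd: "distinct [a, b, d]"
    and B: "exactly_one_interlaced w a b d"
  shows "\<exists>N. cyc w N \<and> type_B_word N"
proof -
  let ?n = "length w"
  have ij: "i < ?n" "j < ?n" using edges(2,3) unfolding edge_between_def by simp_all
  then have suc: "Suc i < ?n" "Suc j < ?n" using ends by (auto simp: mod_Suc split: if_splits)
  have pair: "{w ! i, w ! Suc i} = {a, d}" "{w ! j, w ! Suc j} = {b, d}"
    using edges(2,3) suc unfolding edge_between_def by simp_all
  have "1 < ?n" using suc by simp
  then have ab: "{w ! 0, w ! 1} = {a, b}" using edges(1) unfolding edge_between_def by simp
  then have ab': "{{w ! 0, d}, {w ! 1, d}} = {{a, d}, {b, d}}" "distinct [w ! 0, w ! 1, d]"
    "exactly_one_interlaced w (w ! 0) (w ! 1) d"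
    using abd exactly_one_interlaced_perm[OF B, of "w ! 0" "w ! 1" d]
    by (auto simp: doubleton_eq_iff insert_commute)
  have "1 < i" "1 < j" "i \<noteq> j" "Suc i \<noteq> j" "Suc j \<noteq> i" using ends suc by auto
  then consider "1 < i" "Suc i < j" | "1 < j" "Suc j < i" by linarith
  then show ?thesis
  proof cases
    case 1
    then obtain U1 U2 U3 where
      "w = [w ! 0, w ! 1] @ U1 @ [w ! i, w ! Suc i] @ U2 @ [w ! j, w ! Suc j] @ U3"
      using split_three_pairs suc by blast
    from type_B_word_of_blocks[OF dw this ab'(2) _ ab'(3)] show ?thesis
      using ab'(1) pair by simp
  next
    case 2
    then obtain U1 U2 U3 where
      "w = [w ! 0, w ! 1] @ U1 @ [w ! j, w ! Suc j] @ U2 @ [w ! i, w ! Suc i] @ U3"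
      using split_three_pairs suc by blast
    from type_B_word_of_blocks[OF dw this ab'(2) _ ab'(3)] show ?thesis
      using ab'(1) pair by (simp add: insert_commute)
  qed
qed

lemma type_B_word_of_trigon_edges:
  assumes dw: "double_occurrence w"
    and edges: "edge_between w e0 c0 c1" "edge_between w e1 c1 c2" "edge_between w e2 c2 c0"
    and ends: "distinct [e0, Suc e0 mod length w, e1, Suc e1 mod length w, e2, Suc e2 mod length w]"
    and c: "distinct [c0, c1, c2]"
    and B: "exactly_one_interlaced w c0 c1 c2"
  shows "\<exists>N. cyc w N \<and> type_B_word N"
proof -
  let ?n = "length w"
  define sh where "sh p = (p + (?n - e0)) mod ?n" for p
  define w' where "w' = rotate e0 w"
  have e0: "e0 < ?n" using edges(1) unfolding edge_between_def by simp
  then have n0: "0 < ?n" by linarith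
  have cyc: "cyc w w'" unfolding w'_def by (rule cyc_rotate)
  have dw': "double_occurrence w'" using cyc_double_occurrence[OF cyc] dw by simp
  have e2: "edge_between w e2 c0 c2" using edges(3) edge_between_sym by metis
  have edges': "edge_between w' 0 c0 c1" "edge_between w' (sh e2) c0 c2"
    "edge_between w' (sh e1) c1 c2"
    using edge_between_rotate[OF edges(1) e0] edge_between_rotate[OF edges(2) e0]
      edge_between_rotate[OF e2 e0] e0
    unfolding w'_def sh_def by simp_all
  have shSuc: "sh (Suc p mod ?n) = Suc (sh p) mod ?n" for p
    unfolding sh_def by (rule shift_Suc_mod)
  let ?ends = "[e0, Suc e0 mod ?n, e1, Suc e1 mod ?n, e2, Suc e2 mod ?n]"
  have "set ?ends \<subseteq> {..<?n}" using edges n0 unfolding edge_between_def by auto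
  then have "distinct (map sh ?ends)" using distinct_shift[OF e0 _ ends] unfolding sh_def by blast
  moreover have "sh e0 = 0" unfolding sh_def using e0 by simp
  ultimately have "distinct [0, Suc 0 mod ?n, sh e1, Suc (sh e1) mod ?n, sh e2, Suc (sh e2) mod ?n]"
    by (simp only: list.map shSuc)
  then have ends': "distinct [0, 1, sh e2, Suc (sh e2) mod length w', sh e1, Suc (sh e1) mod length w']"
    unfolding w'_def by (auto simp: mod_Suc split: if_splits)
  have "exactly_one_interlaced w' c0 c1 c2" using exactly_one_interlaced_cyc[OF cyc dw] B by simp
  then obtain N where "cyc w' N" "type_B_word N"
    using type_B_word_of_edges_at_start[OF dw' edges' ends' c] by blast
  then show ?thesis using cyc_trans cyc by blast
qed

theorem mainTheorem5:
  fixes w :: "'a list" and s :: "'a \<Rightarrow> bool"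
  assumes "spherical_curve w s"
    and "has_trigon_type_B w s"
  shows "reductivity w \<le> 3"
proof -
  have dw: "double_occurrence w"
    using assms(1) unfolding spherical_curve_def by (simp add: gauss_word_double_occurrence)
  obtain R x y z where T: "is_trigon w s R x y z" and B: "exactly_one_interlaced w x y z"
    using assms(2) unfolding has_trigon_type_B_def exactly_one_interlaced_def by blast
  obtain c0 c1 c2 e0 e1 e2 where cs: "{c0, c1, c2} = {x, y, z}" "distinct [c0, c1, c2]"
    and edges: "edge_between w e0 c0 c1" "edge_between w e1 c1 c2" "edge_between w e2 c2 c0"
    and ends: "distinct [e0, Suc e0 mod length w, e1, Suc e1 mod length w, e2, Suc e2 mod length w]"
    using trigon_edges[OF dw T] by blast
  have "exactly_one_interlaced w c0 c1 c2" by (rule exactly_one_interlaced_perm[OF B cs])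
  then obtain N where N: "cyc w N" "type_B_word N"
    using type_B_word_of_trigon_edges[OF dw edges ends cs(2)] by blast
  have "double_occurrence N" using cyc_double_occurrence[OF N(1)] dw by simp
  then have "reduces_within 3 N" using type_B_word_reduces_within_3 N(2) by blast
  then have "reduces_within 3 w" using reduces_within_cyc[OF _ N(1) dw] by blast
  then show ?thesis using reductivity_le by (fastforce simp: numeral_eq_enat)
qed

end
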